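(* (1) If $A\in\mathrm{Sym}_{>}(\mathbb C^{2d})$, then $\bar A\#A\in\mathrm{Sym}_{\rm p}(\mathbb R^{2d})$. (2) If $A\in\mathrm{Sym}^{\rm qnd}_{>}(\mathbb C^{2d})$, then $\bar A\#A\in\mathrm{Sym}_{\rm p}^{\rm qnd}(\mathbb R^{2d})$.
   Context: Let $d\ge1$, let $\mathbb 1$ denote an identity matrix and $\theta=\begin{bmatrix}0&-i\mathbb 1_d\\ i\mathbb 1_d&0\end{bmatrix}$. $\mathrm{Sym}_{>}(\mathbb C^{n})$ is the set of complex symmetric $n\times n$ matrices with positive definite real part; $\mathrm{Sym}^{\rm qnd}_{>}(\mathbb C^{2d})=\{A\in\mathrm{Sym}_{>}(\mathbb C^{2d}):\det(\mathbb 1+A\theta)\ne0\}$; $\mathrm{Sym}_{>}(\mathbb R^{n})$ is the set of real symmetric positive definite matrices; $\mathrm{Sym}_{\rm p}(\mathbb R^{2d})=\{A\in\mathrm{Sym}_{>}(\mathbb R^{2d}):\sigma(A\theta)\subset[-1,1]\}$ and $\mathrm{Sym}_{\rm p}^{\rm qnd}(\mathbb R^{2d})=\{A\in\mathrm{Sym}_{\rm p}(\mathbb R^{2d}):\det(\mathbb 1+A\theta)\ne0\}$. For $A,B\in\mathrm{Sym}_>(\mathbb C^{2d})$, $A\#B:=J^TM^{-1}J$ with $M=\begin{bmatrix}\theta A\theta&-\theta\\ \theta&\theta B\theta\end{bmatrix}$ (invertible in this case) and $J=\begin{bmatrix}-\mathbb 1_{2d}\\ \mathbb 1_{2d}\end{bmatrix}$.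 $\bar A$ is the entrywise complex conjugate. *)

theory Defs
  imports Complex_Main "Jordan_Normal_Form.Matrix" "Jordan_Normal_Form.Determinant"
    "Jordan_Normal_Form.Char_Poly"
begin

text \<open>All matrices are complex matrices (JNF type complex mat); a matrix is "real"
 if all its entries are real.\<close>

definition theta :: "nat \<Rightarrow> complex mat" where
  "theta d = four_block_mat (0\<^sub>m d d) ((- \<i>) \<cdot>\<^sub>m 1\<^sub>m d) (\<i> \<cdot>\<^sub>m 1\<^sub>m d) (0\<^sub>m d d)"

definition conj_mat :: "complex mat \<Rightarrow> complex mat" where
  "conj_mat A = map_mat cnj A"

definition real_mat :: "complex mat \<Rightarrow> bool" where
  "real_mat A = (\<forall>i < dim_row A. \<forall>j < dim_col A. A $$ (i,j) \<in> \<real>)"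

definition pos_def_real :: "nat \<Rightarrow> real mat \<Rightarrow> bool" where
  "pos_def_real n P = (P \<in> carrier_mat n n \<and> transpose_mat P = P \<and>
     (\<forall>x \<in> carrier_vec n. x \<noteq> 0\<^sub>v n \<longrightarrow> x \<bullet> (P *\<^sub>v x) > 0))"

definition Sym_gt_C :: "nat \<Rightarrow> complex mat set" where
  "Sym_gt_C n = {A. A \<in> carrier_mat n n \<and> transpose_mat A = A \<and> pos_def_real n (map_mat Re A)}"

definition Sym_gt_C_qnd :: "nat \<Rightarrow> complex mat set" where
  "Sym_gt_C_qnd d = {A. A \<in> Sym_gt_C (2*d) \<and> det (1\<^sub>m (2*d) + A * theta d) \<noteq> 0}"

definition Sym_gt_R :: "nat \<Rightarrow> complex mat set" where
  "Sym_gt_R n = {A. A \<in> carrier_mat n n \<and> real_mat A \<and> transpose_mat A = A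
      \<and> pos_def_real n (map_mat Re A)}"

definition Sym_p :: "nat \<Rightarrow> complex mat set" where
  "Sym_p d = {A. A \<in> Sym_gt_R (2*d) \<and>
     (\<forall>e. eigenvalue (A * theta d) e \<longrightarrow> e \<in> \<real> \<and> -1 \<le> Re e \<and> Re e \<le> 1)}"

definition Sym_p_qnd :: "nat \<Rightarrow> complex mat set" where
  "Sym_p_qnd d = {A. A \<in> Sym_p d \<and> det (1\<^sub>m (2*d) + A * theta d) \<noteq> 0}"

definition mat_inv :: "complex mat \<Rightarrow> complex mat" where
  "mat_inv M = (SOME B. inverts_mat M B \<and> inverts_mat B M)"

text \<open>J = [-1; 1], a (4d) x (2d) matrix\<close>
definition Jmat :: "nat \<Rightarrow> complex mat" where
  "Jmat d = mat (4*d) (2*d) (\<lambda>(i,j). if i = j then -1 else if i = j + 2*d then 1 else 0)"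

definition Mmat :: "nat \<Rightarrow> complex mat \<Rightarrow> complex mat \<Rightarrow> complex mat" where
  "Mmat d A B = four_block_mat (theta d * A * theta d) (- theta d) (theta d) (theta d * B * theta d)"

definition sharp :: "nat \<Rightarrow> complex mat \<Rightarrow> complex mat \<Rightarrow> complex mat" where
  "sharp d A B = transpose_mat (Jmat d) * mat_inv (Mmat d A B) * Jmat d"

end

theory Submission imports Defs begin

text \<open>Write \<open>A = R + \<i> Y\<close> with \<open>R\<close>, \<open>Y\<close> real symmetric and \<open>R\<close> positive definite, and
  \<open>\<langle>a, b\<rangle> = a\<^sup>* b\<close>. Since \<open>\<theta>\<close> is a Hermitian involution, every vector in \<open>\<complex>\<^sup>4\<^sup>d\<close> is
  \<open>(\<theta>u, \<theta>w)\<close>, and \<open>M (\<theta>u, \<theta>w) = J x\<close> unfolds to \<open>conj A u = \<theta>(w - x)\<close>, \<open>A w = \<theta>(x - u)\<close>;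
  then \<open>S x = \<theta>(w - u)\<close> for \<open>S = conj A # A\<close>. With \<open>p = w - u\<close>, \<open>q = w + u\<close> the real and
  imaginary parts of these equations read \<open>R q = \<theta>p - \<i>Y p\<close> and \<open>R p + \<theta>q + \<i>Y q = 2\<theta>x\<close>,
  which give \<open>2\<langle>x, S x\<rangle> = \<langle>p, R p\<rangle> + \<langle>q, R q\<rangle>\<close>. Hence \<open>M\<close> is invertible and the Hermitian
  form of the symmetric matrix \<open>S\<close> is real and positive definite, so \<open>S\<close> is real positive definite.
  If \<open>S\<theta>v = e v\<close>, put \<open>x = \<theta>v\<close>; then \<open>p = e x\<close>, and comparing the identity above with
  \<open>\<langle>q \<mp> p, R (q \<mp> p)\<rangle> \<ge> 0\<close> forces \<open>e\<close> to be real with \<open>|e| \<le> 1\<close>. For \<open>e = -1\<close> one gets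
  \<open>q + p = 0\<close>, i.e. \<open>w = 0\<close>, \<open>u = x\<close> and \<open>conj A x = -\<theta>x\<close>; conjugating and transposing, \<open>A + \<theta>\<close> is singular,
  and so is \<open>1 + A\<theta> = (A + \<theta>)\<theta>\<close>.\<close>

lemma mult_mat_vec_sum: assumes "A \<in> carrier_mat n m" "v \<in> carrier_vec m" "i < n"
  shows "(A *\<^sub>v v) $ i = (\<Sum>j<m. A $$ (i,j) * v $ j)"
  using assms by (auto simp: scalar_prod_def lessThan_atLeast0 intro!: sum.cong)

declare index_mult_mat_vec [simp del]

lemma mult_mat_zero_vec: "B \<in> carrier_mat m n \<Longrightarrow> B *\<^sub>v 0\<^sub>v n = 0\<^sub>v m"
  by (rule eq_vecI) (auto simp: mult_mat_vec_sum)

lemma conjugate_mult_mat_vec: assumes B: "B \<in> carrier_mat n m" and v: "v \<in> carrier_vec m"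
  shows "conjugate (B *\<^sub>v v) = conj_mat B *\<^sub>v conjugate v"
proof (rule eq_vecI)
  fix i assume "i < dim_vec (conj_mat B *\<^sub>v conjugate v)"
  then have i: "i < n" using B by (simp add: conj_mat_def)
  have cB: "conj_mat B \<in> carrier_mat n m" using B by (simp add: conj_mat_def)
  show "conjugate (B *\<^sub>v v) $ i = (conj_mat B *\<^sub>v conjugate v) $ i"
    using i B v unfolding mult_mat_vec_sum[OF cB carrier_vec_conjugate[OF v] i]
    by (auto simp: mult_mat_vec_sum[OF B v i] cnj_sum conj_mat_def intro!: sum.cong)
qed (use B in \<open>simp add: conj_mat_def\<close>)

lemma mat_inv_right_inverse:
  assumes M: "M \<in> carrier_mat n n" and det: "det M \<noteq> 0"
  shows "mat_inv M \<in> carrier_mat n n" "M * mat_inv M = 1\<^sub>m n"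
proof -
  obtain B where B: "B \<in> carrier_mat n n" "B * M = 1\<^sub>m n" "M * B = 1\<^sub>m n"
    using det_non_zero_imp_unit[OF M det] unfolding Units_def ring_mat_def by auto
  then have "inverts_mat M B \<and> inverts_mat B M" unfolding inverts_mat_def using M by auto
  then have inv: "inverts_mat M (mat_inv M) \<and> inverts_mat (mat_inv M) M"
    unfolding mat_inv_def by (rule someI)
  then show MZ: "M * mat_inv M = 1\<^sub>m n" unfolding inverts_mat_def using M by simp
  have "dim_row (mat_inv M) = n" "dim_col (mat_inv M) = n"
    using inv arg_cong[OF MZ, of dim_col] M unfolding inverts_mat_def by (auto dest: arg_cong[of _ _ dim_col])
  then show "mat_inv M \<in> carrier_mat n n" by auto
qed

lemma det_one_plus_eq_0_iff_eigenvalue: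
  fixes B :: "'a :: field mat"
  assumes B: "B \<in> carrier_mat n n"
  shows "det (1\<^sub>m n + B) = 0 \<longleftrightarrow> eigenvalue B (-1)"
proof -
  have "char_matrix B (-1) = 1\<^sub>m n + B"
    using B unfolding char_matrix_def by (intro eq_matI) auto
  then show ?thesis using eigenvalue_det[OF B] by simp
qed

lemma symmetric_right_inverse:
  fixes M :: "'a :: comm_ring_1 mat"
  assumes M: "M \<in> carrier_mat n n" "transpose_mat M = M"
    and Z: "Z \<in> carrier_mat n n" "M * Z = 1\<^sub>m n"
  shows "transpose_mat Z = Z"
proof -
  have ZtM: "transpose_mat Z * M = 1\<^sub>m n"
    using arg_cong[OF Z(2), of transpose_mat] transpose_mult[OF M(1) Z(1)] M(2) by simp
  have "transpose_mat Z = transpose_mat Z * (M * Z)" using Z by simp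
  also have "\<dots> = (transpose_mat Z * M) * Z" using M Z by (simp add: assoc_mult_mat[of _ n n])
  also have "\<dots> = Z" unfolding ZtM using Z by simp
  finally show ?thesis .
qed

lemma symmetric_congruence:
  fixes Z :: "'a :: comm_ring_1 mat"
  assumes J: "J \<in> carrier_mat n m" and Z: "Z \<in> carrier_mat n n" "transpose_mat Z = Z"
  shows "transpose_mat (transpose_mat J * Z * J) = transpose_mat J * Z * J"
proof -
  have "transpose_mat (transpose_mat J * Z * J) = transpose_mat J * transpose_mat (transpose_mat J * Z)"
    using J Z by (intro transpose_mult) auto
  also have "transpose_mat (transpose_mat J * Z) = Z * J"
    using J Z by (subst transpose_mult[of _ m n]) auto
  also have "transpose_mat J * (Z * J) = transpose_mat J * Z * J"
    using J Z by (simp add: assoc_mult_mat[of _ m n])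
  finally show ?thesis .
qed

section \<open>Hermitian forms\<close>

definition herm_form :: "nat \<Rightarrow> complex mat \<Rightarrow> complex vec \<Rightarrow> complex vec \<Rightarrow> complex" where
  "herm_form n H a b = (\<Sum>i<n. cnj (a $ i) * (\<Sum>j<n. H $$ (i,j) * b $ j))"

definition is_hermitian :: "nat \<Rightarrow> complex mat \<Rightarrow> bool" where
  "is_hermitian n H \<longleftrightarrow> (\<forall>i<n. \<forall>j<n. H $$ (i,j) = cnj (H $$ (j,i)))"

lemma herm_form_mult_vec: assumes "H \<in> carrier_mat n n" "b \<in> carrier_vec n"
  shows "herm_form n H a b = (\<Sum>i<n. cnj (a $ i) * (H *\<^sub>v b) $ i)"
  unfolding herm_form_def using assms by (auto simp: mult_mat_vec_sum intro!: sum.cong)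

lemma herm_form_cnj_swap: assumes "is_hermitian n H"
  shows "herm_form n H a b = cnj (herm_form n H b a)"
proof -
  have "cnj (herm_form n H b a) = (\<Sum>i<n. \<Sum>j<n. b $ i * cnj (H $$ (i,j)) * cnj (a $ j))"
    unfolding herm_form_def by (simp add: cnj_sum sum_distrib_left mult.assoc)
  also have "\<dots> = (\<Sum>i<n. \<Sum>j<n. b $ i * H $$ (j,i) * cnj (a $ j))"
    using assms unfolding is_hermitian_def by (intro sum.cong refl) (metis lessThan_iff)
  also have "\<dots> = (\<Sum>j<n. \<Sum>i<n. b $ i * H $$ (j,i) * cnj (a $ j))"
    by (rule sum.swap)
  also have "\<dots> = herm_form n H a b"
    unfolding herm_form_def by (simp add: sum_distrib_left mult_ac)
  finally show ?thesis by simp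
qed

lemma herm_form_real: "is_hermitian n H \<Longrightarrow> herm_form n H a a \<in> \<real>"
  using herm_form_cnj_swap[of n H a a] by (metis Reals_cnj_iff)

lemma herm_form_add: assumes "a \<in> carrier_vec n" "b \<in> carrier_vec n"
  shows "herm_form n H (a + b) (a + b) =
    herm_form n H a a + herm_form n H a b + herm_form n H b a + herm_form n H b b"
proof -
  have "herm_form n H (a + b) (a + b)
      = (\<Sum>i<n. \<Sum>j<n. cnj (a $ i + b $ i) * (H $$ (i,j) * (a $ j + b $ j)))"
    unfolding herm_form_def sum_distrib_left using assms by (intro sum.cong refl) auto
  also have "\<dots> = (\<Sum>i<n. \<Sum>j<n. cnj (a $ i) * (H $$ (i,j) * a $ j) + cnj (a $ i) * (H $$ (i,j) * b $ j)
      + cnj (b $ i) * (H $$ (i,j) * a $ j) + cnj (b $ i) * (H $$ (i,j) * b $ j))"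
    by (intro sum.cong refl) (simp add: algebra_simps)
  also have "\<dots> = herm_form n H a a + herm_form n H a b + herm_form n H b a + herm_form n H b b"
    unfolding herm_form_def sum_distrib_left by (simp add: sum.distrib)
  finally show ?thesis .
qed

lemma herm_form_diff_smult: assumes "a \<in> carrier_vec n" "b \<in> carrier_vec n"
  shows "herm_form n H (a - c \<cdot>\<^sub>v b) (a - c \<cdot>\<^sub>v b) =
    herm_form n H a a - c * herm_form n H a b - cnj c * herm_form n H b a + cnj c * c * herm_form n H b b"
proof -
  have "herm_form n H (a - c \<cdot>\<^sub>v b) (a - c \<cdot>\<^sub>v b)
      = (\<Sum>i<n. \<Sum>j<n. cnj (a $ i - c * b $ i) * (H $$ (i,j) * (a $ j - c * b $ j)))"
    unfolding herm_form_def sum_distrib_left using assms by (intro sum.cong refl) auto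
  also have "\<dots> = (\<Sum>i<n. \<Sum>j<n. cnj (a $ i) * (H $$ (i,j) * a $ j)
      - c * (cnj (a $ i) * (H $$ (i,j) * b $ j)) - cnj c * (cnj (b $ i) * (H $$ (i,j) * a $ j))
      + cnj c * c * (cnj (b $ i) * (H $$ (i,j) * b $ j)))"
    by (intro sum.cong refl) (simp add: algebra_simps)
  also have "\<dots> = herm_form n H a a - c * herm_form n H a b - cnj c * herm_form n H b a
      + cnj c * c * herm_form n H b b"
    unfolding herm_form_def sum_distrib_left by (simp add: sum.distrib sum_subtractf sum_distrib_left)
  finally show ?thesis .
qed

lemma herm_form_smult: assumes "a \<in> carrier_vec n" "b \<in> carrier_vec n"
  shows "herm_form n H (c \<cdot>\<^sub>v a) (c \<cdot>\<^sub>v b) = cnj c * c * herm_form n H a b"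
  unfolding herm_form_def sum_distrib_left using assms by (intro sum.cong refl) (auto simp: mult_ac)

lemma herm_form_smult_left: "a \<in> carrier_vec n \<Longrightarrow> herm_form n H (c \<cdot>\<^sub>v a) b = cnj c * herm_form n H a b"
  unfolding herm_form_def sum_distrib_left by (intro sum.cong refl) (auto simp: mult_ac)

lemma herm_form_unit_vec: assumes i: "i < n" and j: "j < n"
  shows "herm_form n S (unit_vec n i) (unit_vec n j) = S $$ (i,j)"
proof -
  have "herm_form n S (unit_vec n i) (unit_vec n j) = (\<Sum>k<n. if k = i then S $$ (k,j) else 0)"
  proof (unfold herm_form_def, intro sum.cong refl)
    fix k assume "k \<in> {..<n}"
    then have "(\<Sum>l<n. S $$ (k,l) * unit_vec n j $ l) = (\<Sum>l<n. if l = j then S $$ (k,l) else 0)"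
      using j by (intro sum.cong) auto
    then show "cnj (unit_vec n i $ k) * (\<Sum>l<n. S $$ (k,l) * unit_vec n j $ l)
        = (if k = i then S $$ (k,j) else 0)"
      using i j \<open>k \<in> {..<n}\<close> by simp
  qed
  then show ?thesis using i by simp
qed

lemma real_mat_of_herm_form_real:
  assumes S: "S \<in> carrier_mat n n" "transpose_mat S = S"
    and real: "\<And>x. x \<in> carrier_vec n \<Longrightarrow> herm_form n S x x \<in> \<real>"
  shows "real_mat S"
  unfolding real_mat_def
proof (intro allI impI)
  fix i j assume "i < dim_row S" "j < dim_col S"
  then have i: "i < n" and j: "j < n" using S by auto
  have diag: "S $$ (k,k) \<in> \<real>" if "k < n" for k
    using real[of "unit_vec n k"] herm_form_unit_vec[OF that that] by simp
  have "S $$ (j,i) = S $$ (i,j)"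
    using S(1) i j by (subst S(2)[symmetric]) simp
  then have "S $$ (i,i) + 2 * S $$ (i,j) + S $$ (j,j) \<in> \<real>"
    using real[of "unit_vec n i + unit_vec n j"]
    by (simp add: herm_form_add herm_form_unit_vec i j add_ac)
  then have "Im (S $$ (i,j)) = 0" using diag[OF i] diag[OF j] by (simp add: complex_is_Real_iff)
  then show "S $$ (i,j) \<in> \<real>" by (simp add: complex_is_Real_iff)
qed

lemma pos_def_real_of_herm_form:
  assumes S: "S \<in> carrier_mat n n" "transpose_mat S = S"
    and pos: "\<And>x. x \<in> carrier_vec n \<Longrightarrow> x \<noteq> 0\<^sub>v n \<Longrightarrow> Re (herm_form n S x x) > 0"
  shows "pos_def_real n (map_mat Re S)"
  unfolding pos_def_real_def
proof (intro conjI ballI impI)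
  show "map_mat Re S \<in> carrier_mat n n" using S by simp
  show "transpose_mat (map_mat Re S) = map_mat Re S"
    using S by (metis map_mat_transpose)
  fix x :: "real vec" assume x: "x \<in> carrier_vec n" and x0: "x \<noteq> 0\<^sub>v n"
  let ?xc = "map_vec complex_of_real x"
  have "x \<bullet> (map_mat Re S *\<^sub>v x) = (\<Sum>i<n. x $ i * (\<Sum>j<n. Re (S $$ (i,j)) * x $ j))"
    using S x unfolding scalar_prod_def
    by (auto simp: lessThan_atLeast0[symmetric] mult_mat_vec_sum[of _ n n] intro!: sum.cong)
  also have "\<dots> = Re (herm_form n S ?xc ?xc)"
    unfolding herm_form_def Re_sum using x by (intro sum.cong refl) (simp add: Re_sum sum_distrib_left)
  finally have "x \<bullet> (map_mat Re S *\<^sub>v x) = Re (herm_form n S ?xc ?xc)" .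
  moreover have "?xc \<noteq> 0\<^sub>v n"
  proof
    assume "?xc = 0\<^sub>v n"
    then have "x $ i = 0" if "i < n" for i
      using that x by (metis carrier_vecD index_map_vec(1) index_zero_vec(1) of_real_eq_0_iff)
    then show False using x x0 by (auto intro!: eq_vecI)
  qed
  ultimately show "x \<bullet> (map_mat Re S *\<^sub>v x) > 0" using pos[of ?xc] x by simp
qed

lemma pos_def_real_nonneg: assumes "pos_def_real n P" "x \<in> carrier_vec n"
  shows "x \<bullet> (P *\<^sub>v x) \<ge> 0"
  using assms unfolding pos_def_real_def by (cases "x = 0\<^sub>v n") (auto intro: less_imp_le)

lemma pos_def_real_eq_0: assumes "pos_def_real n P" "x \<in> carrier_vec n" "x \<bullet> (P *\<^sub>v x) = 0"
  shows "x = 0\<^sub>v n"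
  using assms unfolding pos_def_real_def by force

lemma Re_herm_form_real_part: assumes A: "A \<in> carrier_mat n n" and z: "z \<in> carrier_vec n"
  shows "Re (herm_form n (map_mat (\<lambda>a. complex_of_real (Re a)) A) z z) =
    vec n (\<lambda>i. Re (z $ i)) \<bullet> (map_mat Re A *\<^sub>v vec n (\<lambda>i. Re (z $ i))) +
    vec n (\<lambda>i. Im (z $ i)) \<bullet> (map_mat Re A *\<^sub>v vec n (\<lambda>i. Im (z $ i)))"
proof -
  have quad: "vec n f \<bullet> (map_mat Re A *\<^sub>v vec n f) = (\<Sum>i<n. \<Sum>j<n. Re (A $$ (i,j)) * (f i * f j))" for f
  proof -
    have "vec n f \<bullet> (map_mat Re A *\<^sub>v vec n f) = (\<Sum>i<n. f i * (\<Sum>j<n. Re (A $$ (i,j)) * f j))"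
      using A unfolding scalar_prod_def
      by (auto simp: lessThan_atLeast0[symmetric] mult_mat_vec_sum[of _ n n] intro!: sum.cong)
    then show ?thesis by (simp add: sum_distrib_left mult_ac)
  qed
  show ?thesis
    unfolding quad herm_form_def sum_distrib_left Re_sum sum.distrib[symmetric]
    using A by (intro sum.cong refl) (simp add: algebra_simps)
qed

lemma Re_herm_form_real_part_nonneg:
  assumes "A \<in> carrier_mat n n" "pos_def_real n (map_mat Re A)" "z \<in> carrier_vec n"
  shows "Re (herm_form n (map_mat (\<lambda>a. complex_of_real (Re a)) A) z z) \<ge> 0"
  unfolding Re_herm_form_real_part[OF assms(1,3)] using assms(2)
  by (intro add_nonneg_nonneg pos_def_real_nonneg) auto

lemma Re_herm_form_real_part_eq_0:
  assumes A: "A \<in> carrier_mat n n" and P: "pos_def_real n (map_mat Re A)" and z: "z \<in> carrier_vec n"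
    and z0: "Re (herm_form n (map_mat (\<lambda>a. complex_of_real (Re a)) A) z z) = 0"
  shows "z = 0\<^sub>v n"
proof -
  let ?a = "vec n (\<lambda>i. Re (z $ i))" and ?b = "vec n (\<lambda>i. Im (z $ i))"
  have "?a \<bullet> (map_mat Re A *\<^sub>v ?a) = 0" "?b \<bullet> (map_mat Re A *\<^sub>v ?b) = 0"
    using z0 pos_def_real_nonneg[OF P, of ?a] pos_def_real_nonneg[OF P, of ?b]
    unfolding Re_herm_form_real_part[OF A z] by auto
  then have "?a = 0\<^sub>v n" "?b = 0\<^sub>v n" using pos_def_real_eq_0[OF P] by auto
  then have "Re (z $ i) = 0 \<and> Im (z $ i) = 0" if "i < n" for i
    using that by (metis index_vec index_zero_vec(1))
  then show ?thesis using z by (intro eq_vecI) (auto simp: complex_eq_iff)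
qed

text \<open>In the application, \<open>a + \<i> b\<close> is an eigenvalue, \<open>\<rho>\<close> and \<open>\<sigma>\<close> are values of the
  positive form \<open>\<langle>z, R z\<rangle>\<close> and \<open>\<alpha>\<close> is a value of the indefinite form \<open>\<langle>z, \<theta> z\<rangle>\<close>.\<close>

lemma unit_interval_of_quadratic_constraints:
  fixes a b \<alpha> \<rho> \<sigma> :: real
  assumes r: "\<rho> > 0" and s: "\<sigma> \<ge> 0" and e1: "2 * a * \<alpha> = (a*a + b*b) * \<rho> + \<sigma>" and e2: "b * \<alpha> = 0"
    and i1: "\<sigma> + (a*a + b*b) * \<rho> - 2 * (a*a + b*b) * \<alpha> \<ge> 0"
    and i2: "\<sigma> + (a*a + b*b) * \<rho> + 2 * (a*a + b*b) * \<alpha> \<ge> 0"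
  shows "b = 0 \<and> -1 \<le> a \<and> a \<le> 1"
proof (cases "\<alpha> = 0")
  case True
  have "(a*a + b*b) * \<rho> + \<sigma> = 0" using e1 True by simp
  moreover have "(a*a + b*b) * \<rho> \<ge> 0" using r by simp
  ultimately have "(a*a + b*b) * \<rho> = 0" using s by linarith
  then have "a*a + b*b = 0" using r by simp
  then show ?thesis by (simp add: add_nonneg_eq_0_iff)
next
  case False
  then have b0: "b = 0" using e2 by simp
  have t1: "a * a * \<alpha> \<le> a * \<alpha>" and t2: "- (a * a * \<alpha>) \<le> a * \<alpha>"
    using e1 i1 i2 b0 by simp_all
  have "a * a * \<bar>\<alpha>\<bar> \<le> a * \<alpha>"
    using t1 t2 by (cases "\<alpha> \<ge> 0") simp_all
  also have "\<dots> \<le> \<bar>a\<bar> * \<bar>\<alpha>\<bar>" by (metis abs_ge_self abs_mult)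
  finally have "\<bar>a\<bar> * (\<bar>a\<bar> * \<bar>\<alpha>\<bar>) \<le> 1 * (\<bar>a\<bar> * \<bar>\<alpha>\<bar>)"
    by (simp add: abs_mult_self_eq mult.assoc)
  then have "\<bar>a\<bar> \<le> 1 \<or> \<bar>a\<bar> * \<bar>\<alpha>\<bar> \<le> 0" by (metis mult_le_cancel_right not_le)
  then have "\<bar>a\<bar> \<le> 1" using False by (auto simp: mult_le_0_iff)
  then show ?thesis using b0 by (auto simp: abs_le_iff)
qed

section \<open>The matrices \<open>\<theta>\<close>, \<open>J\<close> and \<open>M\<close>\<close>

lemma theta_carrier [simp]: "theta d \<in> carrier_mat (2*d) (2*d)"
  unfolding theta_def mult_2 by (rule four_block_carrier_mat, auto)

lemma dim_theta [simp]: "dim_row (theta d) = 2*d" "dim_col (theta d) = 2*d"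
  using theta_carrier[of d] by (auto simp del: theta_carrier)

lemma theta_index: "i < 2*d \<Longrightarrow> j < 2*d \<Longrightarrow> theta d $$ (i,j) =
  (if i < d then (if j = i + d then -\<i> else 0) else (if j + d = i then \<i> else 0))"
  unfolding theta_def by auto

lemma theta_mult_vec_index: assumes v: "v \<in> carrier_vec (2*d)" and i: "i < 2*d"
  shows "(theta d *\<^sub>v v) $ i = (if i < d then -\<i> * v $ (i+d) else \<i> * v $ (i-d))"
proof -
  have "(theta d *\<^sub>v v) $ i = (\<Sum>j<2*d. theta d $$ (i,j) * v $ j)"
    using v i by (intro mult_mat_vec_sum, auto)
  also have "\<dots> = (\<Sum>j<2*d. if i < d then (if j = i + d then -\<i> * v $ j else 0)
                                else (if j = i - d then \<i> * v $ j else 0))"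
    by (rule sum.cong, auto simp: theta_index i)
  also have "\<dots> = (if i < d then -\<i> * v $ (i+d) else \<i> * v $ (i-d))"
    using i by (cases "i < d", auto)
  finally show ?thesis .
qed

lemma theta_A_mult_vec_carrier [simp]: "v \<in> carrier_vec (2*d) \<Longrightarrow> theta d *\<^sub>v v \<in> carrier_vec (2*d)"
  by (rule mult_mat_vec_carrier[OF theta_carrier])

lemma theta_mult_theta_vec [simp]: assumes v: "v \<in> carrier_vec (2*d)"
  shows "theta d *\<^sub>v (theta d *\<^sub>v v) = v"
proof (rule eq_vecI)
  fix i assume "i < dim_vec v"
  then have i: "i < 2*d" using v by auto
  have tv: "theta d *\<^sub>v v \<in> carrier_vec (2*d)" using v by simp
  show "(theta d *\<^sub>v (theta d *\<^sub>v v)) $ i = v $ i"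
    unfolding theta_mult_vec_index[OF tv i] using i by (auto simp: theta_mult_vec_index[OF v])
qed (use v in auto)

lemma theta_mult_theta: "theta d * theta d = 1\<^sub>m (2*d)"
proof (rule eq_matI)
  fix i j assume "i < dim_row (1\<^sub>m (2*d) :: complex mat)" "j < dim_col (1\<^sub>m (2*d) :: complex mat)"
  then have i: "i < 2*d" and j: "j < 2*d" by auto
  have c: "col (theta d) j \<in> carrier_vec (2*d)" unfolding carrier_vec_def by simp
  have "(theta d * theta d) $$ (i,j) = (theta d *\<^sub>v col (theta d) j) $ i"
    using i j by (simp add: index_mult_mat index_mult_mat_vec)
  also have "\<dots> = 1\<^sub>m (2*d) $$ (i,j)"
    using i j by (auto simp: theta_mult_vec_index[OF c i] theta_index)
  finally show "(theta d * theta d) $$ (i,j) = 1\<^sub>m (2*d) $$ (i,j)" .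
qed auto

lemma transpose_theta: "transpose_mat (theta d) = - theta d"
  by (rule eq_matI, auto simp: theta_index)

lemma conj_mat_theta: "conj_mat (theta d) = - theta d"
  unfolding conj_mat_def by (rule eq_matI, auto simp: theta_index)

lemma theta_mult_vec_eq_0_iff: "v \<in> carrier_vec (2*d) \<Longrightarrow> theta d *\<^sub>v v = 0\<^sub>v (2*d) \<longleftrightarrow> v = 0\<^sub>v (2*d)"
  by (metis theta_mult_theta_vec mult_mat_zero_vec theta_carrier)

lemma theta_is_hermitian: "is_hermitian (2*d) (theta d)"
  unfolding is_hermitian_def by (auto simp: theta_index)

lemma symmetric_theta_conj:
  assumes X: "X \<in> carrier_mat (2*d) (2*d)" and Xs: "transpose_mat X = X"
  shows "transpose_mat (theta d * X * theta d) = theta d * X * theta d"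
proof -
  let ?T = "theta d"
  have "transpose_mat (?T * X * ?T) = transpose_mat ?T * transpose_mat (?T * X)"
    using X by (intro transpose_mult) auto
  also have "transpose_mat (?T * X) = transpose_mat X * transpose_mat ?T"
    using X by (intro transpose_mult) auto
  also have "transpose_mat ?T * (transpose_mat X * transpose_mat ?T) = ?T * (X * ?T)"
    using X unfolding Xs transpose_theta by simp
  also have "\<dots> = ?T * X * ?T" using X by (intro assoc_mult_mat[symmetric]) auto
  finally show ?thesis .
qed

lemma Jmat_carrier [simp]: "Jmat d \<in> carrier_mat (4*d) (2*d)"
  unfolding Jmat_def by auto

lemma dim_Jmat [simp]: "dim_row (Jmat d) = 4*d" "dim_col (Jmat d) = 2*d"
  unfolding Jmat_def by auto

lemma Jmat_mult_vec: assumes x: "x \<in> carrier_vec (2*d)" shows "Jmat d *\<^sub>v x = (-x) @\<^sub>v x"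
proof (rule eq_vecI)
  fix i assume "i < dim_vec ((-x) @\<^sub>v x)"
  then have i: "i < 4*d" using x by auto
  have "(Jmat d *\<^sub>v x) $ i = (\<Sum>j<2*d. Jmat d $$ (i,j) * x $ j)"
    by (rule mult_mat_vec_sum[OF Jmat_carrier x i])
  also have "\<dots> = (\<Sum>j<2*d. if i < 2*d then (if j = i then - x $ i else 0)
                               else (if j = i - 2*d then x $ (i - 2*d) else 0))"
    by (rule sum.cong[OF refl]) (use i in \<open>auto simp: Jmat_def\<close>)
  also have "\<dots> = ((-x) @\<^sub>v x) $ i" using i x by auto
  finally show "(Jmat d *\<^sub>v x) $ i = ((-x) @\<^sub>v x) $ i" .
qed (use x in auto)

lemma transpose_Jmat_mult_vec: assumes v1: "v1 \<in> carrier_vec (2*d)" and v2: "v2 \<in> carrier_vec (2*d)"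
  shows "transpose_mat (Jmat d) *\<^sub>v (v1 @\<^sub>v v2) = v2 - v1"
proof (rule eq_vecI)
  fix i assume "i < dim_vec (v2 - v1)"
  then have i: "i < 2*d" using v1 v2 by auto
  have c: "v1 @\<^sub>v v2 \<in> carrier_vec (4*d)" using v1 v2 unfolding carrier_vec_def by auto
  have "(transpose_mat (Jmat d) *\<^sub>v (v1 @\<^sub>v v2)) $ i
      = (\<Sum>j<4*d. transpose_mat (Jmat d) $$ (i,j) * (v1 @\<^sub>v v2) $ j)"
    by (rule mult_mat_vec_sum[OF _ c i], auto)
  also have "\<dots> = (\<Sum>j<4*d. (if j = i then - v1 $ i else 0) + (if j = i + 2*d then v2 $ i else 0))"
    by (rule sum.cong[OF refl]) (use i v1 v2 in \<open>auto simp: Jmat_def\<close>)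
  also have "\<dots> = (v2 - v1) $ i" using i v1 v2 by (simp add: sum.distrib)
  finally show "(transpose_mat (Jmat d) *\<^sub>v (v1 @\<^sub>v v2)) $ i = (v2 - v1) $ i" .
qed (use v1 v2 in simp)

lemma Mmat_carrier [simp]:
  assumes "A \<in> carrier_mat (2*d) (2*d)" "B \<in> carrier_mat (2*d) (2*d)"
  shows "Mmat d A B \<in> carrier_mat (4*d) (4*d)"
proof -
  have "Mmat d A B \<in> carrier_mat (2*d + 2*d) (2*d + 2*d)"
    unfolding Mmat_def using assms by (intro four_block_carrier_mat) auto
  then show ?thesis by simp
qed

lemma Mmat_mult_theta_append:
  assumes A: "A \<in> carrier_mat (2*d) (2*d)" and B: "B \<in> carrier_mat (2*d) (2*d)"
    and u: "u \<in> carrier_vec (2*d)" and w: "w \<in> carrier_vec (2*d)"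
  shows "Mmat d A B *\<^sub>v ((theta d *\<^sub>v u) @\<^sub>v (theta d *\<^sub>v w))
       = (theta d *\<^sub>v (A *\<^sub>v u) - w) @\<^sub>v (u + theta d *\<^sub>v (B *\<^sub>v w))"
proof -
  let ?T = "theta d"
  have conj: "(?T * C * ?T) *\<^sub>v (?T *\<^sub>v v) = ?T *\<^sub>v (C *\<^sub>v v)"
    if C: "C \<in> carrier_mat (2*d) (2*d)" and v: "v \<in> carrier_vec (2*d)" for C v
  proof -
    have "(?T * C * ?T) *\<^sub>v (?T *\<^sub>v v) = (?T * C) *\<^sub>v (?T *\<^sub>v (?T *\<^sub>v v))"
      using C v by (intro assoc_mult_mat_vec) auto
    also have "\<dots> = ?T *\<^sub>v (C *\<^sub>v v)"
      using C v by (subst assoc_mult_mat_vec) auto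
    finally show ?thesis .
  qed
  have "Mmat d A B *\<^sub>v ((?T *\<^sub>v u) @\<^sub>v (?T *\<^sub>v w))
      = ((?T * A * ?T) *\<^sub>v (?T *\<^sub>v u) + (- ?T) *\<^sub>v (?T *\<^sub>v w))
        @\<^sub>v (?T *\<^sub>v (?T *\<^sub>v u) + (?T * B * ?T) *\<^sub>v (?T *\<^sub>v w))"
    unfolding Mmat_def using A B u w by (intro four_block_mat_mult_vec) auto
  also have "\<dots> = (?T *\<^sub>v (A *\<^sub>v u) - w) @\<^sub>v (u + ?T *\<^sub>v (B *\<^sub>v w))"
    using A B u w by (simp add: conj minus_add_uminus_vec[of _ "2*d"])
  finally show ?thesis .
qed

lemma symmetric_Mmat:
  assumes A: "A \<in> carrier_mat (2*d) (2*d)" "transpose_mat A = A"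
    and B: "B \<in> carrier_mat (2*d) (2*d)" "transpose_mat B = B"
  shows "transpose_mat (Mmat d A B) = Mmat d A B"
proof -
  have c: "theta d * C * theta d \<in> carrier_mat (2*d) (2*d)" if "C \<in> carrier_mat (2*d) (2*d)" for C
    using that by auto
  show ?thesis unfolding Mmat_def
    using transpose_four_block_mat[OF c[OF A(1)] _ theta_carrier c[OF B(1)], of "- theta d"]
    by (simp add: symmetric_theta_conj A B transpose_theta transpose_uminus)
qed

lemma append_theta_surj:
  assumes v: "v \<in> carrier_vec (4*d)"
  obtains u w where "u \<in> carrier_vec (2*d)" "w \<in> carrier_vec (2*d)"
    "v = (theta d *\<^sub>v u) @\<^sub>v (theta d *\<^sub>v w)"
proof
  have v': "v \<in> carrier_vec (2*d + 2*d)" using v by simp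
  show "v = (theta d *\<^sub>v (theta d *\<^sub>v vec_first v (2*d))) @\<^sub>v (theta d *\<^sub>v (theta d *\<^sub>v vec_last v (2*d)))"
    using vec_first_last_append[OF v'] by simp
qed simp_all

section \<open>The sharp product of \<open>A\<close> with its conjugate\<close>
locale Sym_gt_C_mat =
  fixes d :: nat and A :: "complex mat"
  assumes A_Sym_gt_C: "A \<in> Sym_gt_C (2*d)"
begin

abbreviation "T \<equiv> theta d"
abbreviation "R \<equiv> map_mat (\<lambda>a. complex_of_real (Re a)) A"
abbreviation "Y \<equiv> map_mat (\<lambda>a. complex_of_real (Im a)) A"
abbreviation "M \<equiv> Mmat d (conj_mat A) A"
abbreviation "S \<equiv> sharp d (conj_mat A) A"

lemma A_carrier [simp]: "A \<in> carrier_mat (2*d) (2*d)"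
  and A_symmetric: "transpose_mat A = A"
  and Re_A_pos_def: "pos_def_real (2*d) (map_mat Re A)"
  using A_Sym_gt_C unfolding Sym_gt_C_def by auto

lemma conj_A_carrier [simp]: "conj_mat A \<in> carrier_mat (2*d) (2*d)"
  and R_carrier [simp]: "R \<in> carrier_mat (2*d) (2*d)"
  and Y_carrier [simp]: "Y \<in> carrier_mat (2*d) (2*d)"
  using A_carrier unfolding conj_mat_def by auto

lemma A_mult_vec_carrier [simp]:
  assumes "v \<in> carrier_vec (2*d)"
  shows "A *\<^sub>v v \<in> carrier_vec (2*d)" "conj_mat A *\<^sub>v v \<in> carrier_vec (2*d)"
    "R *\<^sub>v v \<in> carrier_vec (2*d)" "Y *\<^sub>v v \<in> carrier_vec (2*d)"
  using assms mult_mat_vec_carrier[OF A_carrier] mult_mat_vec_carrier[OF conj_A_carrier]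
    mult_mat_vec_carrier[OF R_carrier] mult_mat_vec_carrier[OF Y_carrier] by blast+

lemma dim_A [simp]: "dim_row A = 2*d" "dim_col A = 2*d"
  using carrier_matD[OF A_carrier] by auto

lemma A_index_sym: assumes "i < 2*d" "j < 2*d" shows "A $$ (j,i) = A $$ (i,j)"
proof -
  have "transpose_mat A $$ (i,j) = A $$ (j,i)" using assms by simp
  then show ?thesis unfolding A_symmetric by simp
qed

lemma R_is_hermitian: "is_hermitian (2*d) R"
  and Y_is_hermitian: "is_hermitian (2*d) Y"
  unfolding is_hermitian_def by (auto simp: A_index_sym)

lemma herm_form_R_real_nonneg: assumes "z \<in> carrier_vec (2*d)"
  shows "herm_form (2*d) R z z = complex_of_real (Re (herm_form (2*d) R z z))"
    and "Re (herm_form (2*d) R z z) \<ge> 0"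
  using herm_form_real[OF R_is_hermitian, of z]
    Re_herm_form_real_part_nonneg[OF A_carrier Re_A_pos_def assms]
  by (auto simp: complex_is_Real_iff complex_eq_iff)

lemma herm_form_R_eq_0: "z \<in> carrier_vec (2*d) \<Longrightarrow> Re (herm_form (2*d) R z z) = 0 \<Longrightarrow> z = 0\<^sub>v (2*d)"
  by (rule Re_herm_form_real_part_eq_0[OF A_carrier Re_A_pos_def])

lemma A_mult_vec_index: assumes v: "v \<in> carrier_vec (2*d)" and i: "i < 2*d"
  shows "(A *\<^sub>v v) $ i = (R *\<^sub>v v) $ i + \<i> * (Y *\<^sub>v v) $ i"
    and "(conj_mat A *\<^sub>v v) $ i = (R *\<^sub>v v) $ i - \<i> * (Y *\<^sub>v v) $ i"
proof -
  have "(A *\<^sub>v v) $ i = (\<Sum>j<2*d. R $$ (i,j) * v $ j + \<i> * (Y $$ (i,j) * v $ j))"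
    and "(conj_mat A *\<^sub>v v) $ i = (\<Sum>j<2*d. R $$ (i,j) * v $ j - \<i> * (Y $$ (i,j) * v $ j))"
    unfolding mult_mat_vec_sum[OF A_carrier v i] mult_mat_vec_sum[OF conj_A_carrier v i]
    using i by (auto simp: conj_mat_def algebra_simps complex_eq_iff intro!: sum.cong)
  then show "(A *\<^sub>v v) $ i = (R *\<^sub>v v) $ i + \<i> * (Y *\<^sub>v v) $ i"
    and "(conj_mat A *\<^sub>v v) $ i = (R *\<^sub>v v) $ i - \<i> * (Y *\<^sub>v v) $ i"
    unfolding mult_mat_vec_sum[OF R_carrier v i] mult_mat_vec_sum[OF Y_carrier v i]
    by (simp_all add: sum.distrib sum_subtractf sum_distrib_left)
qed

context
  fixes u w x
  assumes u: "u \<in> carrier_vec (2*d)" and w: "w \<in> carrier_vec (2*d)" and x: "x \<in> carrier_vec (2*d)"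
    and sol: "M *\<^sub>v ((T *\<^sub>v u) @\<^sub>v (T *\<^sub>v w)) = Jmat d *\<^sub>v x"
begin

lemma sharp_system: "conj_mat A *\<^sub>v u = T *\<^sub>v (w - x)" "A *\<^sub>v w = T *\<^sub>v (x - u)"
proof -
  have "(T *\<^sub>v (conj_mat A *\<^sub>v u) - w) @\<^sub>v (u + T *\<^sub>v (A *\<^sub>v w)) = (-x) @\<^sub>v x"
    using sol unfolding Mmat_mult_theta_append[OF conj_A_carrier A_carrier u w] Jmat_mult_vec[OF x] .
  moreover have "T *\<^sub>v (conj_mat A *\<^sub>v u) - w \<in> carrier_vec (2*d)" "-x \<in> carrier_vec (2*d)"
    using u w x by auto
  ultimately have e1: "T *\<^sub>v (conj_mat A *\<^sub>v u) - w = -x" and e2: "u + T *\<^sub>v (A *\<^sub>v w) = x"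
    using append_vec_eq by blast+
  have "T *\<^sub>v (conj_mat A *\<^sub>v u) = w - x"
  proof (rule eq_vecI)
    fix i assume "i < dim_vec (w - x)"
    then show "(T *\<^sub>v (conj_mat A *\<^sub>v u)) $ i = (w - x) $ i"
      using arg_cong[OF e1, of "\<lambda>v. v $ i"] u w x by (simp add: algebra_simps)
  qed (use w x in simp)
  then show "conj_mat A *\<^sub>v u = T *\<^sub>v (w - x)"
    using theta_mult_theta_vec[of "conj_mat A *\<^sub>v u" d] u by simp
  have "T *\<^sub>v (A *\<^sub>v w) = x - u"
  proof (rule eq_vecI)
    fix i assume "i < dim_vec (x - u)"
    then show "(T *\<^sub>v (A *\<^sub>v w)) $ i = (x - u) $ i"
      using arg_cong[OF e2, of "\<lambda>v. v $ i"] u w x by (simp add: algebra_simps)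
  qed (use x u in simp)
  then show "A *\<^sub>v w = T *\<^sub>v (x - u)"
    using theta_mult_theta_vec[of "A *\<^sub>v w" d] w by simp
qed

lemma sharp_system_Re_Im: assumes i: "i < 2*d"
  shows "(R *\<^sub>v (w + u)) $ i = (T *\<^sub>v (w - u)) $ i - \<i> * (Y *\<^sub>v (w - u)) $ i"
    and "(R *\<^sub>v (w - u)) $ i + (T *\<^sub>v (w + u)) $ i + \<i> * (Y *\<^sub>v (w + u)) $ i = 2 * (T *\<^sub>v x) $ i"
proof -
  have Ru: "(R *\<^sub>v u) $ i = (T *\<^sub>v w) $ i - (T *\<^sub>v x) $ i + \<i> * (Y *\<^sub>v u) $ i"
    using arg_cong[OF sharp_system(1), of "\<lambda>v. v $ i"] u w x i
    by (simp add: A_mult_vec_index mult_minus_distrib_mat_vec[OF theta_carrier w x] algebra_simps)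
  have Rw: "(R *\<^sub>v w) $ i = (T *\<^sub>v x) $ i - (T *\<^sub>v u) $ i - \<i> * (Y *\<^sub>v w) $ i"
    using arg_cong[OF sharp_system(2), of "\<lambda>v. v $ i"] u w x i
    by (simp add: A_mult_vec_index mult_minus_distrib_mat_vec[OF theta_carrier x u] algebra_simps)
  have lin: "(H *\<^sub>v (w + u)) $ i = (H *\<^sub>v w) $ i + (H *\<^sub>v u) $ i"
    "(H *\<^sub>v (w - u)) $ i = (H *\<^sub>v w) $ i - (H *\<^sub>v u) $ i"
    if "H \<in> carrier_mat (2*d) (2*d)" for H
    using that u w i by (simp_all add: mult_add_distrib_mat_vec[OF that w u]
        mult_minus_distrib_mat_vec[OF that w u])
  show "(R *\<^sub>v (w + u)) $ i = (T *\<^sub>v (w - u)) $ i - \<i> * (Y *\<^sub>v (w - u)) $ i"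
    and "(R *\<^sub>v (w - u)) $ i + (T *\<^sub>v (w + u)) $ i + \<i> * (Y *\<^sub>v (w + u)) $ i = 2 * (T *\<^sub>v x) $ i"
    unfolding lin[OF R_carrier] lin[OF Y_carrier] lin[OF theta_carrier] Ru Rw by (simp_all add: algebra_simps)
qed

lemma diff_sum_carrier [simp]: "w - u \<in> carrier_vec (2*d)" "w + u \<in> carrier_vec (2*d)"
  using u w by auto

lemma herm_form_sharp_system:
  "2 * herm_form (2*d) T (w - u) x = herm_form (2*d) R (w - u) (w - u) + herm_form (2*d) R (w + u) (w + u)"
proof -
  let ?p = "w - u" and ?q = "w + u" and ?n = "2*d"
  have "2 * herm_form ?n T ?p x = (\<Sum>i<?n. cnj (?p $ i) * (R *\<^sub>v ?p) $ i
      + cnj (?p $ i) * (T *\<^sub>v ?q) $ i + \<i> * (cnj (?p $ i) * (Y *\<^sub>v ?q) $ i))"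
    unfolding herm_form_mult_vec[OF theta_carrier x] sum_distrib_left
  proof (intro sum.cong refl)
    fix i assume "i \<in> {..<?n}"
    then have "2 * (cnj (?p $ i) * (T *\<^sub>v x) $ i)
        = cnj (?p $ i) * ((R *\<^sub>v ?p) $ i + (T *\<^sub>v ?q) $ i + \<i> * (Y *\<^sub>v ?q) $ i)"
      by (simp add: sharp_system_Re_Im(2))
    then show "2 * (cnj (?p $ i) * (T *\<^sub>v x) $ i) = cnj (?p $ i) * (R *\<^sub>v ?p) $ i
        + cnj (?p $ i) * (T *\<^sub>v ?q) $ i + \<i> * (cnj (?p $ i) * (Y *\<^sub>v ?q) $ i)"
      by (simp add: algebra_simps)
  qed
  also have "\<dots> = herm_form ?n R ?p ?p + herm_form ?n T ?p ?q + \<i> * herm_form ?n Y ?p ?q"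
    by (simp add: herm_form_mult_vec sum.distrib sum_distrib_left)
  finally have p: "2 * herm_form ?n T ?p x = herm_form ?n R ?p ?p + herm_form ?n T ?p ?q + \<i> * herm_form ?n Y ?p ?q" .
  have "herm_form ?n R ?q ?q = (\<Sum>i<?n. cnj (?q $ i) * (T *\<^sub>v ?p) $ i - \<i> * (cnj (?q $ i) * (Y *\<^sub>v ?p) $ i))"
    unfolding herm_form_mult_vec[OF R_carrier diff_sum_carrier(2)]
    by (intro sum.cong refl) (simp add: sharp_system_Re_Im(1) algebra_simps)
  also have "\<dots> = herm_form ?n T ?q ?p - \<i> * herm_form ?n Y ?q ?p"
    by (simp add: herm_form_mult_vec sum_subtractf sum_distrib_left)
  finally have "herm_form ?n R ?q ?q = herm_form ?n T ?q ?p - \<i> * herm_form ?n Y ?q ?p" .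
  then have "cnj (herm_form ?n R ?q ?q) = herm_form ?n T ?p ?q + \<i> * herm_form ?n Y ?p ?q"
    by (simp add: herm_form_cnj_swap[OF theta_is_hermitian, of d ?p] herm_form_cnj_swap[OF Y_is_hermitian, of ?p])
  then show ?thesis
    unfolding p herm_form_cnj_swap[OF R_is_hermitian, of ?q ?q, symmetric] by simp
qed

lemma herm_form_R_shift:
  "herm_form (2*d) R ((w + u) - complex_of_real c \<cdot>\<^sub>v (w - u)) ((w + u) - complex_of_real c \<cdot>\<^sub>v (w - u)) =
   herm_form (2*d) R (w + u) (w + u) + complex_of_real (c * c) * herm_form (2*d) R (w - u) (w - u)
   - 2 * complex_of_real c * herm_form (2*d) T (w - u) (w - u)"
proof -
  let ?p = "w - u" and ?q = "w + u" and ?n = "2*d"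
  have "herm_form ?n R ?p ?q = (\<Sum>i<?n. cnj (?p $ i) * (T *\<^sub>v ?p) $ i - \<i> * (cnj (?p $ i) * (Y *\<^sub>v ?p) $ i))"
    unfolding herm_form_mult_vec[OF R_carrier diff_sum_carrier(2)]
    by (intro sum.cong refl) (simp add: sharp_system_Re_Im(1) algebra_simps)
  also have "\<dots> = herm_form ?n T ?p ?p - \<i> * herm_form ?n Y ?p ?p"
    by (simp add: herm_form_mult_vec sum_subtractf sum_distrib_left)
  finally have pq: "herm_form ?n R ?p ?q = herm_form ?n T ?p ?p - \<i> * herm_form ?n Y ?p ?p" .
  have "cnj (herm_form ?n T ?p ?p) = herm_form ?n T ?p ?p" "cnj (herm_form ?n Y ?p ?p) = herm_form ?n Y ?p ?p"
    by (simp_all add: herm_form_cnj_swap[OF theta_is_hermitian, symmetric]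
        herm_form_cnj_swap[OF Y_is_hermitian, symmetric])
  then have qp: "herm_form ?n R ?q ?p = 2 * herm_form ?n T ?p ?p - herm_form ?n R ?p ?q"
    unfolding herm_form_cnj_swap[OF R_is_hermitian, of ?q ?p] pq by simp
  show ?thesis
    unfolding herm_form_diff_smult[OF diff_sum_carrier(2,1)] qp by (simp add: algebra_simps)
qed

lemma sharp_system_eq_0:
  assumes "Re (herm_form (2*d) R (w - u) (w - u)) + Re (herm_form (2*d) R (w + u) (w + u)) = 0"
  shows "u = 0\<^sub>v (2*d)" "w = 0\<^sub>v (2*d)"
proof -
  have "w - u = 0\<^sub>v (2*d)" "w + u = 0\<^sub>v (2*d)"
    using assms herm_form_R_real_nonneg(2)[of "w - u"] herm_form_R_real_nonneg(2)[of "w + u"] herm_form_R_eq_0 by auto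
  moreover have "u $ i = ((w + u) $ i - (w - u) $ i) / 2" "w $ i = ((w + u) $ i + (w - u) $ i) / 2"
    if "i < 2*d" for i
    using that u w by (simp_all add: field_simps)
  ultimately have "u $ i = 0 \<and> w $ i = 0" if "i < 2*d" for i
    using that by simp
  then show "u = 0\<^sub>v (2*d)" "w = 0\<^sub>v (2*d)" using u w by (auto intro!: eq_vecI)
qed

lemma sharp_system_eigenvalue:
  assumes p: "w - u = e \<cdot>\<^sub>v x" and x0: "x \<noteq> 0\<^sub>v (2*d)"
  shows "e \<in> \<real> \<and> -1 \<le> Re e \<and> Re e \<le> 1" and "e = -1 \<Longrightarrow> w = 0\<^sub>v (2*d)"
proof -
  let ?n = "2*d" and ?q = "w + u"
  define \<alpha> where "\<alpha> = Re (herm_form ?n T x x)"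
  define \<rho> where "\<rho> = Re (herm_form ?n R x x)"
  define \<sigma> where "\<sigma> = Re (herm_form ?n R ?q ?q)"
  define K where "K = Re e * Re e + Im e * Im e"
  have hT: "herm_form ?n T x x = complex_of_real \<alpha>"
    using herm_form_real[OF theta_is_hermitian, of d x] unfolding \<alpha>_def
    by (simp add: complex_is_Real_iff complex_eq_iff)
  have hR: "herm_form ?n R x x = complex_of_real \<rho>" and hq: "herm_form ?n R ?q ?q = complex_of_real \<sigma>"
    unfolding \<rho>_def \<sigma>_def using herm_form_R_real_nonneg(1) x by simp_all
  have "\<rho> \<ge> 0" "\<rho> \<noteq> 0"
    using herm_form_R_real_nonneg(2)[OF x] herm_form_R_eq_0[OF x] x0 unfolding \<rho>_def by auto
  then have \<rho>: "\<rho> > 0" by simp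
  have \<sigma>: "\<sigma> \<ge> 0" unfolding \<sigma>_def by (simp add: herm_form_R_real_nonneg(2))
  have N: "cnj e * e = complex_of_real K" unfolding K_def by (simp add: complex_eq_iff)
  have hp: "herm_form ?n H (w - u) (w - u) = complex_of_real K * herm_form ?n H x x" for H
    unfolding p herm_form_smult[OF x x] N ..
  have "2 * (cnj e * complex_of_real \<alpha>) = complex_of_real K * complex_of_real \<rho> + complex_of_real \<sigma>"
    using herm_form_sharp_system unfolding hp hR hq unfolding p herm_form_smult_left[OF x] hT .
  from arg_cong[OF this, of Re] arg_cong[OF this, of Im]
  have e1: "2 * Re e * \<alpha> = K * \<rho> + \<sigma>" and e2: "Im e * \<alpha> = 0" by simp_all
  have shift: "Re (herm_form ?n R (?q - complex_of_real c \<cdot>\<^sub>v (w - u)) (?q - complex_of_real c \<cdot>\<^sub>v (w - u)))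
      = \<sigma> + c * c * (K * \<rho>) - 2 * c * (K * \<alpha>)" for c
    unfolding herm_form_R_shift hp hR hT hq by simp
  have shift_nonneg: "\<sigma> + c * c * (K * \<rho>) - 2 * c * (K * \<alpha>) \<ge> 0" for c
    using herm_form_R_real_nonneg(2)[of "?q - complex_of_real c \<cdot>\<^sub>v (w - u)"] u w unfolding shift by simp
  have "\<sigma> + K * \<rho> - 2 * K * \<alpha> \<ge> 0" "\<sigma> + K * \<rho> + 2 * K * \<alpha> \<ge> 0"
    using shift_nonneg[of 1] shift_nonneg[of "-1"] by simp_all
  from unit_interval_of_quadratic_constraints[OF \<rho> \<sigma> e1[unfolded K_def] e2 this[unfolded K_def]]
  show "e \<in> \<real> \<and> -1 \<le> Re e \<and> Re e \<le> 1" by (simp add: complex_is_Real_iff)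
  assume "e = -1"
  then have "Re (herm_form ?n R (?q - complex_of_real (-1) \<cdot>\<^sub>v (w - u)) (?q - complex_of_real (-1) \<cdot>\<^sub>v (w - u))) = 0"
    using e1 unfolding shift K_def by simp
  then have z: "?q - complex_of_real (-1) \<cdot>\<^sub>v (w - u) = 0\<^sub>v ?n"
    using u w by (intro herm_form_R_eq_0) auto
  have "w $ i = 0" if "i < ?n" for i
    using that u w arg_cong[OF z, of "\<lambda>v. v $ i"] by simp
  then show "w = 0\<^sub>v ?n" using w by (auto intro!: eq_vecI)
qed

end

lemma M_carrier [simp]: "M \<in> carrier_mat (4*d) (4*d)"
  by simp

lemma M_mult_vec_eq_0:
  assumes v: "v \<in> carrier_vec (4*d)" and Mv: "M *\<^sub>v v = 0\<^sub>v (4*d)"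
  shows "v = 0\<^sub>v (4*d)"
proof -
  obtain u w where u: "u \<in> carrier_vec (2*d)" and w: "w \<in> carrier_vec (2*d)"
    and vd: "v = (T *\<^sub>v u) @\<^sub>v (T *\<^sub>v w)"
    using append_theta_surj[OF v] by blast
  have sol: "M *\<^sub>v ((T *\<^sub>v u) @\<^sub>v (T *\<^sub>v w)) = Jmat d *\<^sub>v 0\<^sub>v (2*d)"
    using Mv vd by (simp add: mult_mat_zero_vec[OF Jmat_carrier])
  have "herm_form (2*d) T (w - u) (0\<^sub>v (2*d)) = 0"
    using u w by (simp add: herm_form_mult_vec mult_mat_zero_vec[OF theta_carrier])
  then have "Re (herm_form (2*d) R (w - u) (w - u)) + Re (herm_form (2*d) R (w + u) (w + u)) = 0"
    using herm_form_sharp_system[OF u w zero_carrier_vec sol] by (metis mult_zero_right plus_complex.sel(1) zero_complex.sel(1))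
  then have "u = 0\<^sub>v (2*d)" "w = 0\<^sub>v (2*d)"
    using sharp_system_eq_0[OF u w zero_carrier_vec sol] by auto
  then show ?thesis using vd by (auto simp: mult_mat_zero_vec[OF theta_carrier] intro!: eq_vecI)
qed

lemma det_M_nonzero: "det M \<noteq> 0"
  using det_0_iff_vec_prod_zero[OF M_carrier] M_mult_vec_eq_0 by blast

lemma sharp_carrier [simp]: "S \<in> carrier_mat (2*d) (2*d)"
  unfolding sharp_def
  by (rule mult_carrier_mat[OF mult_carrier_mat[OF _ mat_inv_right_inverse(1)[OF M_carrier det_M_nonzero]]
        Jmat_carrier]) simp

lemma dim_sharp [simp]: "dim_row S = 2*d" "dim_col S = 2*d"
  using carrier_matD[OF sharp_carrier] by auto

lemma sharp_mult_vec:
  assumes x: "x \<in> carrier_vec (2*d)"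
  obtains u w where "u \<in> carrier_vec (2*d)" "w \<in> carrier_vec (2*d)"
    "M *\<^sub>v ((T *\<^sub>v u) @\<^sub>v (T *\<^sub>v w)) = Jmat d *\<^sub>v x" "S *\<^sub>v x = T *\<^sub>v (w - u)"
proof -
  let ?Z = "mat_inv M"
  note Z = mat_inv_right_inverse[OF M_carrier det_M_nonzero]
  have Jx: "Jmat d *\<^sub>v x \<in> carrier_vec (4*d)" using mult_mat_vec_carrier[OF Jmat_carrier x] .
  obtain u w where u: "u \<in> carrier_vec (2*d)" and w: "w \<in> carrier_vec (2*d)"
    and vd: "?Z *\<^sub>v (Jmat d *\<^sub>v x) = (T *\<^sub>v u) @\<^sub>v (T *\<^sub>v w)"
    using append_theta_surj[OF mult_mat_vec_carrier[OF Z(1) Jx]] by blast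
  have "M *\<^sub>v ((T *\<^sub>v u) @\<^sub>v (T *\<^sub>v w)) = (M * ?Z) *\<^sub>v (Jmat d *\<^sub>v x)"
    unfolding vd[symmetric] using Z(1) Jx by (simp add: assoc_mult_mat_vec[of _ "4*d" "4*d"])
  also have "\<dots> = Jmat d *\<^sub>v x" unfolding Z(2) using Jx by simp
  finally have sol: "M *\<^sub>v ((T *\<^sub>v u) @\<^sub>v (T *\<^sub>v w)) = Jmat d *\<^sub>v x" .
  have "S *\<^sub>v x = transpose_mat (Jmat d) *\<^sub>v (?Z *\<^sub>v (Jmat d *\<^sub>v x))"
  proof -
    have JZ: "transpose_mat (Jmat d) * ?Z \<in> carrier_mat (2*d) (4*d)"
      using Z(1) by (intro mult_carrier_mat) auto
    show ?thesis unfolding sharp_def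
      using assoc_mult_mat_vec[OF JZ Jmat_carrier x] assoc_mult_mat_vec[OF _ Z(1) Jx, of "transpose_mat (Jmat d)" "2*d"]
      by simp
  qed
  also have "\<dots> = T *\<^sub>v (w - u)"
    unfolding vd transpose_Jmat_mult_vec[OF mult_mat_vec_carrier[OF theta_carrier u]
        mult_mat_vec_carrier[OF theta_carrier w]]
    using u w by (simp add: mult_minus_distrib_mat_vec[OF theta_carrier])
  finally show ?thesis using that u w sol by blast
qed

lemma herm_form_sharp:
  assumes x: "x \<in> carrier_vec (2*d)"
  shows "herm_form (2*d) S x x \<in> \<real>" and "x \<noteq> 0\<^sub>v (2*d) \<Longrightarrow> Re (herm_form (2*d) S x x) > 0"
proof -
  obtain u w where u: "u \<in> carrier_vec (2*d)" and w: "w \<in> carrier_vec (2*d)"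
    and sol: "M *\<^sub>v ((T *\<^sub>v u) @\<^sub>v (T *\<^sub>v w)) = Jmat d *\<^sub>v x" and Sx: "S *\<^sub>v x = T *\<^sub>v (w - u)"
    using sharp_mult_vec[OF x] by blast
  define \<rho> where "\<rho> = Re (herm_form (2*d) R (w - u) (w - u))"
  define \<sigma> where "\<sigma> = Re (herm_form (2*d) R (w + u) (w + u))"
  have "2 * herm_form (2*d) T (w - u) x = complex_of_real \<rho> + complex_of_real \<sigma>"
    using herm_form_sharp_system[OF u w x sol] herm_form_R_real_nonneg(1)[of "w - u"] herm_form_R_real_nonneg(1)[of "w + u"] u w
    unfolding \<rho>_def \<sigma>_def by simp
  then have hT: "herm_form (2*d) T (w - u) x = complex_of_real ((\<rho> + \<sigma>) / 2)"
    by (simp add: field_simps)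
  have "herm_form (2*d) S x x = herm_form (2*d) T x (w - u)"
    using u w unfolding herm_form_mult_vec[OF sharp_carrier x] Sx by (simp add: herm_form_mult_vec)
  also have "\<dots> = complex_of_real ((\<rho> + \<sigma>) / 2)"
    unfolding herm_form_cnj_swap[OF theta_is_hermitian, of d x] hT by simp
  finally have hS: "herm_form (2*d) S x x = complex_of_real ((\<rho> + \<sigma>) / 2)" .
  then show "herm_form (2*d) S x x \<in> \<real>" by (simp only: Reals_of_real)
  assume x0: "x \<noteq> 0\<^sub>v (2*d)"
  have "\<rho> \<ge> 0" "\<sigma> \<ge> 0" unfolding \<rho>_def \<sigma>_def using u w by (simp_all add: herm_form_R_real_nonneg(2))
  show "Re (herm_form (2*d) S x x) > 0"
  proof (rule ccontr)
    assume "\<not> Re (herm_form (2*d) S x x) > 0"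
    then have "Re (herm_form (2*d) R (w - u) (w - u)) + Re (herm_form (2*d) R (w + u) (w + u)) = 0"
      using \<open>\<rho> \<ge> 0\<close> \<open>\<sigma> \<ge> 0\<close> unfolding hS \<rho>_def \<sigma>_def by simp
    from sharp_system_eq_0[OF u w x sol this] have "u = 0\<^sub>v (2*d)" "w = 0\<^sub>v (2*d)" .
    then have "T *\<^sub>v x = 0\<^sub>v (2*d)"
      using sharp_system(2)[OF u w x sol] x by (simp add: mult_mat_zero_vec[OF A_carrier])
    then show False using theta_mult_vec_eq_0_iff[OF x] x0 by simp
  qed
qed

lemma sharp_symmetric: "transpose_mat S = S"
proof -
  note Z = mat_inv_right_inverse[OF M_carrier det_M_nonzero]
  have "transpose_mat (conj_mat A) = conj_mat A"
  proof (rule eq_matI)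
    fix i j assume "i < dim_row (conj_mat A)" "j < dim_col (conj_mat A)"
    then show "transpose_mat (conj_mat A) $$ (i,j) = conj_mat A $$ (i,j)"
      using A_index_sym[of i j] by (simp add: conj_mat_def)
  qed (simp_all add: conj_mat_def)
  then have "transpose_mat M = M"
    by (rule symmetric_Mmat[OF conj_A_carrier _ A_carrier A_symmetric])
  then have "transpose_mat (mat_inv M) = mat_inv M"
    by (rule symmetric_right_inverse[OF M_carrier _ Z(1) Z(2)])
  then show ?thesis unfolding sharp_def by (rule symmetric_congruence[OF Jmat_carrier Z(1)])
qed

lemma sharp_Sym_gt_R: "S \<in> Sym_gt_R (2*d)"
proof -
  have "real_mat S"
    by (rule real_mat_of_herm_form_real[OF sharp_carrier sharp_symmetric herm_form_sharp(1)])
  moreover have "pos_def_real (2*d) (map_mat Re S)"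
    by (rule pos_def_real_of_herm_form[OF sharp_carrier sharp_symmetric herm_form_sharp(2)])
  ultimately show ?thesis unfolding Sym_gt_R_def using sharp_symmetric by simp
qed

lemma sharp_theta_eigenvector:
  assumes "eigenvector (S * T) v e"
  obtains x u w where "x \<in> carrier_vec (2*d)" "u \<in> carrier_vec (2*d)" "w \<in> carrier_vec (2*d)"
    "M *\<^sub>v ((T *\<^sub>v u) @\<^sub>v (T *\<^sub>v w)) = Jmat d *\<^sub>v x" "x \<noteq> 0\<^sub>v (2*d)" "w - u = e \<cdot>\<^sub>v x"
proof -
  have v: "v \<in> carrier_vec (2*d)" and v0: "v \<noteq> 0\<^sub>v (2*d)" and ev: "(S * T) *\<^sub>v v = e \<cdot>\<^sub>v v"
    using assms unfolding eigenvector_def by auto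
  let ?x = "T *\<^sub>v v"
  have x: "?x \<in> carrier_vec (2*d)" using v by simp
  obtain u w where u: "u \<in> carrier_vec (2*d)" and w: "w \<in> carrier_vec (2*d)"
    and sol: "M *\<^sub>v ((T *\<^sub>v u) @\<^sub>v (T *\<^sub>v w)) = Jmat d *\<^sub>v ?x" and Sx: "S *\<^sub>v ?x = T *\<^sub>v (w - u)"
    using sharp_mult_vec[OF x] by blast
  have "w - u = T *\<^sub>v (S *\<^sub>v ?x)" unfolding Sx using u w by simp
  also have "\<dots> = e \<cdot>\<^sub>v ?x"
    using ev v assoc_mult_mat_vec[OF sharp_carrier theta_carrier v] mult_mat_vec[OF theta_carrier v] by simp
  finally show ?thesis
    using that u w x sol v0 theta_mult_vec_eq_0_iff[OF v] by blast
qed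

lemma eigenvalue_sharp_theta: "eigenvalue (S * T) e \<Longrightarrow> e \<in> \<real> \<and> -1 \<le> Re e \<and> Re e \<le> 1"
  unfolding eigenvalue_def by (metis sharp_theta_eigenvector sharp_system_eigenvalue(1))

lemma eigenvalue_sharp_theta_minus_one:
  assumes "eigenvalue (S * T) (-1)"
  obtains x where "x \<in> carrier_vec (2*d)" "x \<noteq> 0\<^sub>v (2*d)" "conj_mat A *\<^sub>v x = - (T *\<^sub>v x)"
proof -
  obtain x u w where x: "x \<in> carrier_vec (2*d)" and u: "u \<in> carrier_vec (2*d)" and w: "w \<in> carrier_vec (2*d)"
    and sol: "M *\<^sub>v ((T *\<^sub>v u) @\<^sub>v (T *\<^sub>v w)) = Jmat d *\<^sub>v x" and x0: "x \<noteq> 0\<^sub>v (2*d)"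
    and p: "w - u = (-1) \<cdot>\<^sub>v x"
    using assms unfolding eigenvalue_def by (metis sharp_theta_eigenvector)
  have w0: "w = 0\<^sub>v (2*d)" by (rule sharp_system_eigenvalue(2)[OF u w x sol p x0 refl])
  have "u = x"
  proof (rule eq_vecI)
    fix i assume "i < dim_vec x"
    then show "u $ i = x $ i" using arg_cong[OF p, of "\<lambda>v. v $ i"] u w x w0 by simp
  qed (use u x in simp)
  then have "conj_mat A *\<^sub>v x = T *\<^sub>v (0\<^sub>v (2*d) - x)"
    using sharp_system(1)[OF u w x sol] w0 by simp
  also have "\<dots> = - (T *\<^sub>v x)"
    unfolding mult_minus_distrib_mat_vec[OF theta_carrier zero_carrier_vec x] mult_mat_zero_vec[OF theta_carrier]
    using x by simp
  finally show ?thesis using that x x0 by blast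
qed

lemma det_one_plus_A_theta_eq_0:
  assumes x: "x \<in> carrier_vec (2*d)" and x0: "x \<noteq> 0\<^sub>v (2*d)" and ax: "conj_mat A *\<^sub>v x = - (T *\<^sub>v x)"
  shows "det (1\<^sub>m (2*d) + A * T) = 0"
proof -
  have AT: "A - T \<in> carrier_mat (2*d) (2*d)" "A + T \<in> carrier_mat (2*d) (2*d)" by auto
  have "conj_mat (conj_mat A) = A" by (rule eq_matI) (auto simp: conj_mat_def)
  then have "A *\<^sub>v conjugate x = T *\<^sub>v conjugate x"
    using arg_cong[OF ax, of conjugate] x
    by (simp add: conjugate_mult_mat_vec[of _ "2*d" "2*d"] conj_mat_theta uminus_conjugate_vec[symmetric])
  then have "(A - T) *\<^sub>v conjugate x = 0\<^sub>v (2*d)"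
    using x by (simp add: minus_mult_distrib_mat_vec[OF A_carrier theta_carrier])
  then have "det (A - T) = 0"
    using det_0_iff_vec_prod_zero[OF AT(1)] x x0 by (metis carrier_vec_conjugate conjugate_zero_iff_vec)
  moreover have "transpose_mat (A - T) = A + T"
    by (rule eq_matI) (auto simp: A_index_sym theta_index)
  ultimately have "det (A + T) = 0" using det_transpose[OF AT(1)] by simp
  moreover have "1\<^sub>m (2*d) + A * T = (A + T) * T"
    using add_mult_distrib_mat[OF A_carrier theta_carrier theta_carrier] theta_mult_theta[of d]
      comm_add_mat[OF mult_carrier_mat[OF A_carrier theta_carrier] one_carrier_mat] by simp
  ultimately show ?thesis using det_mult[OF AT(2) theta_carrier] by simp
qed

lemma sharp_Sym_p: "S \<in> Sym_p d"
  unfolding Sym_p_def using sharp_Sym_gt_R eigenvalue_sharp_theta by simp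

lemma sharp_Sym_p_qnd:
  assumes "det (1\<^sub>m (2*d) + A * T) \<noteq> 0"
  shows "S \<in> Sym_p_qnd d"
proof -
  have "\<not> eigenvalue (S * T) (-1)"
    using assms det_one_plus_A_theta_eq_0 eigenvalue_sharp_theta_minus_one by metis
  then have "det (1\<^sub>m (2*d) + S * T) \<noteq> 0"
    using det_one_plus_eq_0_iff_eigenvalue[OF mult_carrier_mat[OF sharp_carrier theta_carrier]] by simp
  then show ?thesis unfolding Sym_p_qnd_def using sharp_Sym_p by simp
qed

end

theorem mainTheorem8:
  fixes d :: nat and A :: "complex mat"
  assumes "d \<ge> 1"
  shows "(A \<in> Sym_gt_C (2*d) \<longrightarrow> sharp d (conj_mat A) A \<in> Sym_p d) \<and>
         (A \<in> Sym_gt_C_qnd d \<longrightarrow> sharp d (conj_mat A) A \<in> Sym_p_qnd d)"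
proof (intro conjI impI)
  assume "A \<in> Sym_gt_C (2*d)"
  then interpret Sym_gt_C_mat d A by unfold_locales
  show "sharp d (conj_mat A) A \<in> Sym_p d" by (rule sharp_Sym_p)
next
  assume "A \<in> Sym_gt_C_qnd d"
  then interpret Sym_gt_C_mat d A by unfold_locales (simp add: Sym_gt_C_qnd_def)
  show "sharp d (conj_mat A) A \<in> Sym_p_qnd d"
    using \<open>A \<in> Sym_gt_C_qnd d\<close> unfolding Sym_gt_C_qnd_def by (intro sharp_Sym_p_qnd) simp
qed

end
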